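(* Let $\mathcal C=(C_v)_{v\in V}$ be a univalent circle packing in $S^2$ indexed by a finite set $V$, and let $\mathcal V_{\mathcal C}=\{U\subset V:\bigcap_{v\in U}C_v\neq\emptyset\}$. Let $\varepsilon\in(0,1)$. Then there exists $\delta\in(0,1)$ such that for every $\alpha\in\mathbb R^3$ with $1-\delta<|\alpha|<1$ we have \[V\setminus V_\alpha^1\in\mathcal V_{\mathcal C},\qquad\text{where } V_\alpha^1=\{v\in V: f_\alpha(C_v)\subset B_\varepsilon(\alpha/|\alpha|)\}.\]
   Context: $S^2$ is the unit sphere in $\mathbb R^3$; $B_\varepsilon(x)$ is the open Euclidean ball of radius $\varepsilon$ about $x$. A spherical cap is a connected closed subset of $S^2$ whose boundary in $S^2$ is a circle obtained as the intersection of $S^2$ with an affine plane (neither empty nor a point); a circle packing is a family of spherical caps, univalent if their interiors are mutually disjoint. For $\beta\in S^2$ let $H_\beta=\{y:\langle y-\beta,\beta\rangle=0\}$, $\pi_\beta:H_\beta\cup\{\infty\}\to S^2$ the stereographic projection $\pi_\beta(y)=\frac{4}{|\beta+y|^2}(\beta+y)-\beta$, $\pi_\beta(\infty)=-\beta$; for $\lambda>0$ let $D^\lambda_\beta(y)=\beta+\lambda(y-\beta)$, $D^\lambda_\beta(\infty)=\infty$, and $g^\lambda_\beta=\pi_\beta^{-1}\circ D^\lambda_\beta\circ\pi_\beta:S^2\to S^2$. For $\alpha$ in the open unit ball define $f_\alpha=g^{1-|\alpha|}_{\alpha/|\alpha|}$ if $\alpha\neq0$ and $f_0=\mathrm{Id}_{S^2}$.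 *)

theory Defs
  imports "HOL-Analysis.Analysis"
begin

type_synonym R3 = "real ^ 3"

abbreviation S2 :: "R3 set" where "S2 \<equiv> sphere 0 1"

abbreviation S2top :: "R3 topology" where "S2top \<equiv> subtopology euclidean S2"

definition spherical_cap :: "R3 set \<Rightarrow> bool" where
  "spherical_cap C \<longleftrightarrow> C \<subseteq> S2 \<and> connected C \<and> closed C \<and>
     (\<exists>n c. n \<noteq> 0 \<and> S2top frontier_of C = S2 \<inter> {y. n \<bullet> y = c} \<and>
        (\<exists>x y. x \<noteq> y \<and> x \<in> S2 \<inter> {y. n \<bullet> y = c} \<and> y \<in> S2 \<inter> {y. n \<bullet> y = c}))"

definition univalent_circle_packing :: "'v set \<Rightarrow> ('v \<Rightarrow> R3 set) \<Rightarrow> bool" where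
  "univalent_circle_packing V C \<longleftrightarrow> (\<forall>v\<in>V. spherical_cap (C v)) \<and>
     (\<forall>u\<in>V. \<forall>v\<in>V. u \<noteq> v \<longrightarrow> (S2top interior_of C u) \<inter> (S2top interior_of C v) = {})"

definition nerve_sets :: "'v set \<Rightarrow> ('v \<Rightarrow> R3 set) \<Rightarrow> 'v set set" where
  "nerve_sets V C = {U. U \<subseteq> V \<and> (\<Inter>v\<in>U. C v) \<noteq> {}}"

text \<open>H_beta, with the point at infinity modelled by None.\<close>
definition tangent_plane :: "R3 \<Rightarrow> R3 set" where
  "tangent_plane \<beta> = {y. (y - \<beta>) \<bullet> \<beta> = 0}"

definition stereo_domain :: "R3 \<Rightarrow> R3 option set" where
  "stereo_domain \<beta> = insert None (Some ` tangent_plane \<beta>)"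

fun stereo :: "R3 \<Rightarrow> R3 option \<Rightarrow> R3" where
  "stereo \<beta> (Some y) = (4 / (norm (\<beta> + y))\<^sup>2) *\<^sub>R (\<beta> + y) - \<beta>"
| "stereo \<beta> None = - \<beta>"

fun dilate :: "R3 \<Rightarrow> real \<Rightarrow> R3 option \<Rightarrow> R3 option" where
  "dilate \<beta> lam (Some y) = Some (\<beta> + lam *\<^sub>R (y - \<beta>))"
| "dilate \<beta> lam None = None"

definition gmap :: "R3 \<Rightarrow> real \<Rightarrow> R3 \<Rightarrow> R3" where
  "gmap \<beta> lam x = stereo \<beta> (dilate \<beta> lam (inv_into (stereo_domain \<beta>) (stereo \<beta>) x))"

definition fmap :: "R3 \<Rightarrow> R3 \<Rightarrow> R3" where
  "fmap \<alpha> = (if \<alpha> = 0 then id else gmap (\<alpha> /\<^sub>R norm \<alpha>) (1 - norm \<alpha>))"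

end

theory Submission
  imports Defs
begin

(* For alpha close to the unit sphere, f_alpha is the stereographic conjugate of a strong
   contraction towards beta = alpha / |alpha|; quantitatively
   |f_alpha x - beta| * |x + beta| <= 4 (1 - |alpha|) on S2.  Hence every cap that is not
   mapped into B_eps(beta) comes within 4 (1 - |alpha|) / eps of the antipode -beta.
   Since the caps are finitely many closed subsets of the compact sphere, there is an
   eta > 0 such that caps which all come eta-close to one point of S2 have a common
   point.  The choice delta = min (1/2) (eps * eta / 4) combines the two facts. *)

lemma eventually_nerve_radius:
  fixes C :: "'i \<Rightarrow> 'a::metric_space set"
  assumes "finite U" and "compact S"
    and "\<And>v. v \<in> U \<Longrightarrow> closed (C v)" and "\<And>v. v \<in> U \<Longrightarrow> C v \<noteq> {}"
  shows "\<forall>\<^sub>F \<eta> in at_right 0. \<forall>p\<in>S. (\<forall>v\<in>U. infdist p (C v) < \<eta>) \<longrightarrow> (\<Inter>v\<in>U. C v) \<noteq> {}"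
proof (cases "S = {} \<or> (\<Inter>v\<in>U. C v) \<noteq> {}")
  case True
  then show ?thesis by auto
next
  case False
  then have "S \<noteq> {}" and empty: "(\<Inter>v\<in>U. C v) = {}" by auto
  define F where "F p = (\<Sum>v\<in>U. infdist p (C v))" for p
  have "continuous_on S F"
    unfolding F_def by (intro continuous_on_sum continuous_on_infdist continuous_on_id)
  then obtain p0 where "p0 \<in> S" and p0_min: "\<And>p. p \<in> S \<Longrightarrow> F p0 \<le> F p"
    using continuous_attains_inf[OF \<open>compact S\<close> \<open>S \<noteq> {}\<close>] by blast
  have "F p0 \<noteq> 0"
  proof
    assume "F p0 = 0"
    then have "\<forall>v\<in>U. infdist p0 (C v) = 0"
      using sum_nonneg_eq_0_iff[OF \<open>finite U\<close>, of "\<lambda>v. infdist p0 (C v)"]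
      by (simp add: F_def infdist_nonneg)
    then have "p0 \<in> (\<Inter>v\<in>U. C v)"
      using assms(3,4) in_closed_iff_infdist_zero by blast
    with empty show False by simp
  qed
  then have "F p0 > 0"
    unfolding F_def by (simp add: infdist_nonneg order_less_le sum_nonneg)
  moreover have "U \<noteq> {}" using empty by auto
  ultimately have bound_pos: "F p0 / card U > 0"
    using \<open>finite U\<close> by (simp add: card_gt_0_iff)
  have "\<forall>p\<in>S. (\<forall>v\<in>U. infdist p (C v) < \<eta>) \<longrightarrow> (\<Inter>v\<in>U. C v) \<noteq> {}"
    if "\<eta> < F p0 / card U" for \<eta>
  proof (intro ballI impI)
    fix p assume "p \<in> S" and close: "\<forall>v\<in>U. infdist p (C v) < \<eta>"
    have "F p < (\<Sum>v\<in>U. F p0 / card U)"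
      unfolding F_def[of p] using close that
      by (intro sum_strict_mono[OF \<open>finite U\<close> \<open>U \<noteq> {}\<close>]) force
    also have "\<dots> = F p0"
      using \<open>U \<noteq> {}\<close> \<open>finite U\<close> by simp
    finally show "(\<Inter>v\<in>U. C v) \<noteq> {}"
      using p0_min[OF \<open>p \<in> S\<close>] by simp
  qed
  then show ?thesis
    using bound_pos unfolding eventually_at_right_field by blast
qed

lemma exists_nerve_radius:
  fixes C :: "'i \<Rightarrow> 'a::metric_space set"
  assumes "finite V" and "compact S"
    and "\<And>v. v \<in> V \<Longrightarrow> closed (C v)" and "\<And>v. v \<in> V \<Longrightarrow> C v \<noteq> {}"
  shows "\<exists>\<eta>>0. \<forall>U\<in>Pow V. \<forall>p\<in>S. (\<forall>v\<in>U. infdist p (C v) < \<eta>) \<longrightarrow> (\<Inter>v\<in>U. C v) \<noteq> {}"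
proof -
  have "\<forall>\<^sub>F \<eta> in at_right 0. \<forall>U\<in>Pow V. \<forall>p\<in>S.
          (\<forall>v\<in>U. infdist p (C v) < \<eta>) \<longrightarrow> (\<Inter>v\<in>U. C v) \<noteq> {}"
  proof (rule eventually_ball_finite)
    show "finite (Pow V)"
      using \<open>finite V\<close> by simp
    show "\<forall>U\<in>Pow V. \<forall>\<^sub>F \<eta> in at_right 0. \<forall>p\<in>S.
            (\<forall>v\<in>U. infdist p (C v) < \<eta>) \<longrightarrow> (\<Inter>v\<in>U. C v) \<noteq> {}"
    proof
      fix U assume "U \<in> Pow V"
      then have "finite U"
        using \<open>finite V\<close> finite_subset by auto
      with \<open>U \<in> Pow V\<close> assms(2-4) show "\<forall>\<^sub>F \<eta> in at_right 0. \<forall>p\<in>S.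
          (\<forall>v\<in>U. infdist p (C v) < \<eta>) \<longrightarrow> (\<Inter>v\<in>U. C v) \<noteq> {}"
        by (intro eventually_nerve_radius) auto
    qed
  qed
  then show ?thesis
    using eventually_happens'[OF trivial_limit_at_right_real eventually_conj[OF eventually_at_right_less]]
    by blast
qed

lemma norm_add_tangent_plane_sq:
  assumes "norm \<beta> = 1" and "y \<in> tangent_plane \<beta>"
  shows "(norm (\<beta> + y))\<^sup>2 = 4 + (norm (y - \<beta>))\<^sup>2"
proof -
  have "orthogonal (2 *\<^sub>R \<beta>) (y - \<beta>)"
    using assms(2) by (simp add: orthogonal_def tangent_plane_def inner_commute)
  moreover have "\<beta> + y = 2 *\<^sub>R \<beta> + (y - \<beta>)"
    by (simp add: scaleR_2)
  ultimately have "(norm (\<beta> + y))\<^sup>2 = (norm (2 *\<^sub>R \<beta>))\<^sup>2 + (norm (y - \<beta>))\<^sup>2"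
    by (simp only: norm_add_Pythagorean)
  then show ?thesis
    using assms(1) by simp
qed

lemma norm_stereo_add_mult:
  assumes "\<beta> + y \<noteq> 0"
  shows "norm (stereo \<beta> (Some y) + \<beta>) * norm (\<beta> + y) = 4"
  using assms by (simp add: power2_eq_square)

lemma norm_stereo_diff_mult:
  assumes "norm \<beta> = 1" and "y \<in> tangent_plane \<beta>"
  shows "norm (stereo \<beta> (Some y) - \<beta>) * norm (\<beta> + y) = 2 * norm (y - \<beta>)"
proof -
  define t T c where "t = y - \<beta>" and "T = (norm t)\<^sup>2" and "c = 4 / (4 + T)"
  have N: "(norm (\<beta> + y))\<^sup>2 = 4 + T"
    using norm_add_tangent_plane_sq[OF assms] by (simp add: T_def t_def)
  have "\<beta> + y = 2 *\<^sub>R \<beta> + t"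
    by (simp add: t_def scaleR_2)
  then have "stereo \<beta> (Some y) - \<beta> = c *\<^sub>R (2 *\<^sub>R \<beta> + t) - \<beta> - \<beta>"
    using N by (simp add: c_def)
  also have "\<dots> = (2 * c - 2) *\<^sub>R \<beta> + c *\<^sub>R t"
    by (simp only: scaleR_add_right scaleR_diff_left scaleR_scaleR) (simp add: scaleR_2 algebra_simps)
  finally have "(norm (stereo \<beta> (Some y) - \<beta>))\<^sup>2 = (2 * c - 2)\<^sup>2 + c\<^sup>2 * T"
    using assms by (simp add: norm_add_Pythagorean orthogonal_def tangent_plane_def t_def
        T_def inner_commute power_mult_distrib)
  also have "\<dots> * (4 + T) = 4 * T"
  proof -
    have "4 + T > 0"
      by (simp add: T_def add_pos_nonneg)
    then have "c * (4 + T) = 4"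
      unfolding c_def by (simp add: field_simps)
    have "((2 * c - 2)\<^sup>2 + c\<^sup>2 * T) * (4 + T)
        = (4 * c + c * T) * (c * (4 + T)) - 8 * (c * (4 + T)) + 4 * (4 + T)"
      by (simp add: algebra_simps power2_eq_square)
    also have "\<dots> = 4 * (c * (4 + T)) - 16 + 4 * T"
      using \<open>c * (4 + T) = 4\<close> by (simp add: algebra_simps)
    also have "\<dots> = 4 * T"
      using \<open>c * (4 + T) = 4\<close> by simp
    finally show ?thesis .
  qed
  finally have "(norm (stereo \<beta> (Some y) - \<beta>) * norm (\<beta> + y))\<^sup>2 = (2 * norm (y - \<beta>))\<^sup>2"
    by (simp add: power_mult_distrib N T_def t_def)
  then show ?thesis
    by (rule power2_eq_imp_eq) simp_all
qed

(* stereo beta (Some y) + beta = 4 (beta + y) / |beta + y|^2, i.e. the projection is the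
   inversion in the sphere of radius 2 about -beta, hence an involution. *)
lemma stereo_stereo:
  assumes "\<beta> + x \<noteq> 0"
  shows "stereo \<beta> (Some (stereo \<beta> (Some x))) = x"
proof -
  define r where "r = (norm (\<beta> + x))\<^sup>2"
  have "r > 0" using assms by (simp add: r_def)
  have "(norm ((4 / r) *\<^sub>R (\<beta> + x)))\<^sup>2 = (4 / r)\<^sup>2 * r"
    by (simp only: norm_scaleR power_mult_distrib power2_abs r_def)
  also have "\<dots> = 16 / r"
    using \<open>r > 0\<close> by (simp add: field_simps power2_eq_square)
  finally have "4 / (norm ((4 / r) *\<^sub>R (\<beta> + x)))\<^sup>2 = r / 4"
    by simp
  moreover have "\<beta> + stereo \<beta> (Some x) = (4 / r) *\<^sub>R (\<beta> + x)"
    by (simp add: r_def)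
  ultimately have "stereo \<beta> (Some (stereo \<beta> (Some x))) = (r / 4) *\<^sub>R (4 / r) *\<^sub>R (\<beta> + x) - \<beta>"
    by (simp only: stereo.simps)
  then show ?thesis
    using \<open>r > 0\<close> by simp
qed

lemma stereo_in_tangent_plane:
  assumes "norm \<beta> = 1" and "norm x = 1" and "\<beta> + x \<noteq> 0"
  shows "stereo \<beta> (Some x) \<in> tangent_plane \<beta>"
proof -
  define s where "s = (\<beta> + x) \<bullet> \<beta>"
  have "\<beta> \<bullet> \<beta> = 1" and "x \<bullet> x = 1"
    using assms(1,2) by (simp_all add: dot_square_norm)
  then have "(norm (\<beta> + x))\<^sup>2 = 2 * s"
    unfolding s_def power2_norm_eq_inner by (simp add: inner_add_left inner_add_right inner_commute)
  with assms(3) have "s \<noteq> 0"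
    by auto
  have "(stereo \<beta> (Some x) - \<beta>) \<bullet> \<beta> = 4 / (norm (\<beta> + x))\<^sup>2 * s - \<beta> \<bullet> \<beta> - \<beta> \<bullet> \<beta>"
    by (simp only: stereo.simps inner_diff_left inner_scaleR_left s_def)
  also have "\<dots> = 0"
    using \<open>(norm (\<beta> + x))\<^sup>2 = 2 * s\<close> \<open>s \<noteq> 0\<close> \<open>\<beta> \<bullet> \<beta> = 1\<close> by simp
  finally show ?thesis
    by (simp add: tangent_plane_def)
qed

lemma gmap_eq_stereo_dilate:
  assumes "norm \<beta> = 1" and "x \<in> S2" and "x \<noteq> - \<beta>"
  obtains y where "y \<in> tangent_plane \<beta>" and "stereo \<beta> (Some y) = x"
    and "gmap \<beta> lam x = stereo \<beta> (Some (\<beta> + lam *\<^sub>R (y - \<beta>)))"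
proof -
  have "\<beta> + x \<noteq> 0"
    using assms(3) by (metis add.commute add_eq_0_iff2)
  then have "Some (stereo \<beta> (Some x)) \<in> stereo_domain \<beta>"
    using stereo_in_tangent_plane assms(1,2) by (simp add: stereo_domain_def)
  then have "x \<in> stereo \<beta> ` stereo_domain \<beta>"
    by (rule rev_image_eqI) (rule stereo_stereo[OF \<open>\<beta> + x \<noteq> 0\<close>, symmetric])
  then have "inv_into (stereo_domain \<beta>) (stereo \<beta>) x \<in> stereo_domain \<beta>"
    and "stereo \<beta> (inv_into (stereo_domain \<beta>) (stereo \<beta>) x) = x"
    by (simp_all add: inv_into_into f_inv_into_f)
  with assms(3) obtain y where "y \<in> tangent_plane \<beta>"
    and "inv_into (stereo_domain \<beta>) (stereo \<beta>) x = Some y" and "stereo \<beta> (Some y) = x"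
    unfolding stereo_domain_def by auto
  then show ?thesis
    using that by (simp add: gmap_def)
qed

lemma dist_gmap_mult_dist_antipode_le:
  assumes "norm \<beta> = 1" and "x \<in> S2" and "x \<noteq> - \<beta>" and "0 \<le> lam"
  shows "dist (gmap \<beta> lam x) \<beta> * dist x (- \<beta>) \<le> 4 * lam"
proof -
  obtain y where "y \<in> tangent_plane \<beta>" and "stereo \<beta> (Some y) = x"
    and gmap_eq: "gmap \<beta> lam x = stereo \<beta> (Some (\<beta> + lam *\<^sub>R (y - \<beta>)))"
    using gmap_eq_stereo_dilate[OF assms(1-3)] .
  define w where "w = \<beta> + lam *\<^sub>R (y - \<beta>)"
  have "w \<in> tangent_plane \<beta>"
    using \<open>y \<in> tangent_plane \<beta>\<close> by (simp add: w_def tangent_plane_def)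
  have "2\<^sup>2 \<le> (norm (\<beta> + w))\<^sup>2"
    using norm_add_tangent_plane_sq[OF assms(1) \<open>w \<in> tangent_plane \<beta>\<close>] by simp
  then have "2 \<le> norm (\<beta> + w)"
    by (rule power2_le_imp_le) simp
  moreover have "dist (gmap \<beta> lam x) \<beta> * norm (\<beta> + w) = 2 * norm (w - \<beta>)"
    using norm_stereo_diff_mult[OF assms(1) \<open>w \<in> tangent_plane \<beta>\<close>]
    by (simp add: gmap_eq w_def dist_norm)
  ultimately have "dist (gmap \<beta> lam x) \<beta> \<le> norm (w - \<beta>)"
    using mult_left_mono[of 2 "norm (\<beta> + w)" "dist (gmap \<beta> lam x) \<beta>"] by simp
  also have "\<dots> = lam * norm (y - \<beta>)"
    using assms(4) by (simp add: w_def)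
  finally have gmap_le: "dist (gmap \<beta> lam x) \<beta> \<le> lam * norm (y - \<beta>)" .
  have y_sq: "(norm (\<beta> + y))\<^sup>2 = 4 + (norm (y - \<beta>))\<^sup>2"
    using norm_add_tangent_plane_sq[OF assms(1) \<open>y \<in> tangent_plane \<beta>\<close>] .
  then have "(norm (y - \<beta>))\<^sup>2 \<le> (norm (\<beta> + y))\<^sup>2"
    by simp
  then have "norm (y - \<beta>) \<le> norm (\<beta> + y)"
    by (rule power2_le_imp_le) simp
  have "\<beta> + y \<noteq> 0"
  proof
    assume "\<beta> + y = 0"
    then have "(norm (\<beta> + y))\<^sup>2 = 0"
      by simp
    with y_sq show False
      using zero_le_power2[of "norm (y - \<beta>)"] by linarith
  qed
  then have "norm (x + \<beta>) * norm (\<beta> + y) = 4"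
    using norm_stereo_add_mult[OF \<open>\<beta> + y \<noteq> 0\<close>] by (simp only: \<open>stereo \<beta> (Some y) = x\<close>)
  have "norm (y - \<beta>) * dist x (- \<beta>) \<le> norm (\<beta> + y) * dist x (- \<beta>)"
    using \<open>norm (y - \<beta>) \<le> norm (\<beta> + y)\<close> by (rule mult_right_mono) simp
  also have "\<dots> = 4"
    using \<open>norm (x + \<beta>) * norm (\<beta> + y) = 4\<close> by (simp add: dist_norm mult.commute)
  finally have y_bound: "norm (y - \<beta>) * dist x (- \<beta>) \<le> 4" .
  have "dist (gmap \<beta> lam x) \<beta> * dist x (- \<beta>) \<le> lam * norm (y - \<beta>) * dist x (- \<beta>)"
    using gmap_le by (rule mult_right_mono) simp
  also have "\<dots> = lam * (norm (y - \<beta>) * dist x (- \<beta>))"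
    by (simp only: mult.assoc)
  also have "\<dots> \<le> lam * 4"
    using y_bound assms(4) by (rule mult_left_mono)
  finally show ?thesis
    by (simp only: mult.commute)
qed

lemma infdist_antipode_gmap_le:
  assumes "norm \<beta> = 1" and "C \<subseteq> S2" and "0 \<le> lam" and "0 < \<epsilon>"
    and "\<not> gmap \<beta> lam ` C \<subseteq> ball \<beta> \<epsilon>"
  shows "infdist (- \<beta>) C \<le> 4 * lam / \<epsilon>"
proof -
  obtain x where "x \<in> C" and "\<epsilon> \<le> dist \<beta> (gmap \<beta> lam x)"
    using assms(5) by (auto simp: subset_eq not_less)
  then have far: "\<epsilon> \<le> dist (gmap \<beta> lam x) \<beta>"
    by (metis dist_commute)
  have "infdist (- \<beta>) C \<le> dist x (- \<beta>)"
    using infdist_le[OF \<open>x \<in> C\<close>, of "- \<beta>"] by (metis dist_commute)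
  also have "dist x (- \<beta>) \<le> 4 * lam / \<epsilon>"
  proof (cases "x = - \<beta>")
    case True
    then show ?thesis using assms(3,4) by simp
  next
    case False
    have "\<epsilon> * dist x (- \<beta>) \<le> dist (gmap \<beta> lam x) \<beta> * dist x (- \<beta>)"
      using far by (rule mult_right_mono) simp
    also have "\<dots> \<le> 4 * lam"
      using \<open>x \<in> C\<close> assms(2) by (intro dist_gmap_mult_dist_antipode_le assms(1,3) False) auto
    finally have "\<epsilon> * dist x (- \<beta>) \<le> 4 * lam" .
    then show ?thesis
      using assms(4) by (simp add: field_simps)
  qed
  finally show ?thesis .
qed

lemma infdist_antipode_fmap_le:
  assumes "0 < norm \<alpha>" and "norm \<alpha> < 1" and "C \<subseteq> S2" and "0 < \<epsilon>"
    and "\<not> fmap \<alpha> ` C \<subseteq> ball (\<alpha> /\<^sub>R norm \<alpha>) \<epsilon>"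
  shows "infdist (- (\<alpha> /\<^sub>R norm \<alpha>)) C \<le> 4 * (1 - norm \<alpha>) / \<epsilon>"
  using assms unfolding fmap_def by (intro infdist_antipode_gmap_le) auto

lemma univalent_circle_packing_capD:
  assumes "univalent_circle_packing V C" and "v \<in> V"
  shows "C v \<subseteq> S2" and "closed (C v)" and "C v \<noteq> {}"
proof -
  have "spherical_cap (C v)"
    using assms by (simp add: univalent_circle_packing_def)
  then show "C v \<subseteq> S2" and "closed (C v)" and "C v \<noteq> {}"
    unfolding spherical_cap_def by auto
qed

theorem lemma3p8:
  fixes V :: "'v set" and C :: "'v \<Rightarrow> R3 set" and \<epsilon> :: real
  assumes "finite V" and "univalent_circle_packing V C"
    and "0 < \<epsilon>" and "\<epsilon> < 1"
  shows "\<exists>\<delta>. 0 < \<delta> \<and> \<delta> < 1 \<and>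
    (\<forall>\<alpha> :: R3. 1 - \<delta> < norm \<alpha> \<and> norm \<alpha> < 1 \<longrightarrow>
       V - {v \<in> V. fmap \<alpha> ` C v \<subseteq> ball (\<alpha> /\<^sub>R norm \<alpha>) \<epsilon>} \<in> nerve_sets V C)"
proof -
  note caps = univalent_circle_packing_capD[OF assms(2)]
  have "\<exists>\<eta>>0. \<forall>U\<in>Pow V. \<forall>p\<in>S2.
      (\<forall>v\<in>U. infdist p (C v) < \<eta>) \<longrightarrow> (\<Inter>v\<in>U. C v) \<noteq> {}"
    using assms(1) compact_sphere[of 0 1] caps(2,3) by (rule exists_nerve_radius)
  then obtain \<eta> where "0 < \<eta>" and nerve: "\<forall>U\<in>Pow V. \<forall>p\<in>S2.
      (\<forall>v\<in>U. infdist p (C v) < \<eta>) \<longrightarrow> (\<Inter>v\<in>U. C v) \<noteq> {}"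
    by blast
  define \<delta> where "\<delta> = min (1 / 2) (\<epsilon> * \<eta> / 4)"
  show ?thesis
  proof (intro exI[of _ \<delta>] conjI allI impI)
    show "0 < \<delta>" and "\<delta> < 1"
      using \<open>0 < \<eta>\<close> assms(3) by (simp_all add: \<delta>_def)
    fix \<alpha> :: R3
    assume \<alpha>: "1 - \<delta> < norm \<alpha> \<and> norm \<alpha> < 1"
    then have "0 < norm \<alpha>" and "4 * (1 - norm \<alpha>) / \<epsilon> < \<eta>"
      using assms(3) by (auto simp: \<delta>_def field_simps)
    let ?U = "V - {v \<in> V. fmap \<alpha> ` C v \<subseteq> ball (\<alpha> /\<^sub>R norm \<alpha>) \<epsilon>}"
    have "\<forall>v\<in>?U. infdist (- (\<alpha> /\<^sub>R norm \<alpha>)) (C v) < \<eta>"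
    proof
      fix v assume "v \<in> ?U"
      then have "infdist (- (\<alpha> /\<^sub>R norm \<alpha>)) (C v) \<le> 4 * (1 - norm \<alpha>) / \<epsilon>"
        using \<open>0 < norm \<alpha>\<close> \<alpha> caps(1) assms(3) by (intro infdist_antipode_fmap_le) auto
      with \<open>4 * (1 - norm \<alpha>) / \<epsilon> < \<eta>\<close> show "infdist (- (\<alpha> /\<^sub>R norm \<alpha>)) (C v) < \<eta>"
        by linarith
    qed
    moreover have "?U \<in> Pow V" and "- (\<alpha> /\<^sub>R norm \<alpha>) \<in> S2"
      using \<open>0 < norm \<alpha>\<close> by auto
    ultimately have "(\<Inter>v\<in>?U. C v) \<noteq> {}"
      using nerve by blast
    then show "?U \<in> nerve_sets V C"
      by (simp add: nerve_sets_def)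
  qed
qed

end
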